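(* Let $k$ be a field and $A$ an integral domain that is a $k$-algebra, equipped with $k$-linear derivations $\delta_1,\ldots,\delta_m$. Suppose there is a finite-dimensional $k$-vector subspace $V$ of $A$ and a set $\mathcal S$ of ideals of $A$ such that (i) $\delta_i(I)\subseteq I$ for all $i=1,\ldots,m$ and all $I\in\mathcal S$; (ii) $\bigcap\mathcal S=(0)$; (iii) $V\cap I\neq(0)$ for all $I\in\mathcal S$. Then there exists $f\in\operatorname{Frac}(A)\setminus k$ with $\delta_i(f)=0$ for all $i=1,\ldots,m$.
   Context: All algebras are commutative. The derivations are extended to $\operatorname{Frac}(A)$ by the quotient rule. *)

theory Defs
  imports "HOL-Computational_Algebra.Fraction_Field"
begin

text \<open>The field k is represented by its (isomorphic) image in the domain A,
  i.e. a subfield K of A (a k-algebra structure k -> A is injective since A is a domain).\<close>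
definition subfield :: "'a::idom set \<Rightarrow> bool" where
  "subfield K \<longleftrightarrow> 0 \<in> K \<and> 1 \<in> K \<and> (\<forall>x\<in>K. \<forall>y\<in>K. x + y \<in> K \<and> x * y \<in> K \<and> - x \<in> K)
     \<and> (\<forall>x\<in>K. x \<noteq> 0 \<longrightarrow> (\<exists>y\<in>K. x * y = 1))"

definition lin_derivation :: "'a::idom set \<Rightarrow> ('a \<Rightarrow> 'a) \<Rightarrow> bool" where
  "lin_derivation K D \<longleftrightarrow> (\<forall>x y. D (x + y) = D x + D y)
     \<and> (\<forall>x y. D (x * y) = x * D y + y * D x)
     \<and> (\<forall>c\<in>K. \<forall>x. D (c * x) = c * D x)"

definition frac_deriv :: "('a::idom \<Rightarrow> 'a) \<Rightarrow> 'a fract \<Rightarrow> 'a fract" where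
  "frac_deriv D f = (THE g. \<exists>a b. b \<noteq> 0 \<and> f = Fract a b \<and> g = Fract (D a * b - a * D b) (b * b))"

definition is_ideal :: "'a::idom set \<Rightarrow> bool" where
  "is_ideal I \<longleftrightarrow> 0 \<in> I \<and> (\<forall>x\<in>I. \<forall>y\<in>I. x + y \<in> I) \<and> (\<forall>a. \<forall>x\<in>I. a * x \<in> I)"

definition fin_dim_subspace :: "'a::idom set \<Rightarrow> 'a set \<Rightarrow> bool" where
  "fin_dim_subspace K V \<longleftrightarrow> 0 \<in> V \<and> (\<forall>x\<in>V. \<forall>y\<in>V. x + y \<in> V) \<and> (\<forall>c\<in>K. \<forall>x\<in>V. c * x \<in> V)
     \<and> (\<exists>B. finite B \<and> B \<subseteq> V \<and> V = {\<Sum>b\<in>B. c b * b | c. \<forall>b\<in>B. c b \<in> K})"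

end

theory Submission
  imports Defs
begin

text \<open>Let \<open>B\<close> be a finite spanning set of \<open>V\<close> and \<open>\<D>\<close> the \<open>A\<close>-module of
  differential operators generated by the \<open>\<delta>\<^sub>i\<close>. Either some operators \<open>L\<^sub>b \<in> \<D>\<close> satisfy
  \<open>L\<^sub>b b' = d \<cdot> [b = b']\<close> with \<open>d \<noteq> 0\<close>, or the families \<open>(L b)\<^bsub>b \<in> B\<^esub>\<close>, \<open>L \<in> \<D>\<close>, satisfy a common
  nontrivial \<open>A\<close>-linear relation \<open>g\<close>. In the first case, applying \<open>L\<^sub>b\<close> to a nonzero element of
  \<open>V \<inter> I\<close> shows \<open>d \<in> I\<close> for every \<open>I \<in> \<S>\<close>, contradicting \<open>\<Inter>\<S> = 0\<close>. In the second case take \<open>g\<close>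
  of minimal support and \<open>g b\<^sub>0 \<noteq> 0\<close>: differentiating the relation shows that
  \<open>g b\<^sub>0 \<cdot> \<delta>\<^sub>i (g b) - g b \<cdot> \<delta>\<^sub>i (g b\<^sub>0)\<close> is again a relation, of smaller support, hence zero; so
  the quotients \<open>g b / g b\<^sub>0\<close> are constants. If one of them lies outside \<open>k\<close> we are done;
  otherwise \<open>b\<^sub>0\<close> is a \<open>k\<close>-combination of the other elements of \<open>B\<close>, and we induct on \<open>|B|\<close>.\<close>

lemma frac_deriv_Fract:
  assumes Leibniz: "\<And>x y. D (x * y) = x * D y + y * D x" and "b \<noteq> 0"
  shows "frac_deriv D (Fract a b) = Fract (D a * b - a * D b) (b * b)"
  unfolding frac_deriv_def
proof (rule the_equality)
  fix g assume "\<exists>a' b'. b' \<noteq> 0 \<and> Fract a b = Fract a' b' \<and> g = Fract (D a' * b' - a' * D b') (b' * b')"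
  then obtain a' b' where b': "b' \<noteq> 0" and "Fract a b = Fract a' b'"
    and g: "g = Fract (D a' * b' - a' * D b') (b' * b')" by blast
  then have cross: "a * b' = a' * b" using \<open>b \<noteq> 0\<close> by (simp add: eq_fract)
  then have "a * D b' + b' * D a = a' * D b + b * D a'" using Leibniz[of a b'] Leibniz[of a' b] by metis
  with cross have "(D a' * b' - a' * D b') * (b * b) = (D a * b - a * D b) * (b' * b')" by algebra
  then show "g = Fract (D a * b - a * D b) (b * b)" using g b' \<open>b \<noteq> 0\<close> by (simp add: eq_fract)
qed (use \<open>b \<noteq> 0\<close> in blast)

lemma frac_deriv_Fract_eq_0:
  assumes "\<And>x y. D (x * y) = x * D y + y * D x" and "b \<noteq> 0" and "b * D a = a * D b"
  shows "frac_deriv D (Fract a b) = 0"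
  using assms by (simp add: frac_deriv_Fract mult.commute Zero_fract_def eq_fract)

definition lin_span :: "'a::comm_ring_1 set \<Rightarrow> 'a set \<Rightarrow> 'a set" where
  "lin_span K B = {\<Sum>b\<in>B. c b * b | c. \<forall>b\<in>B. c b \<in> K}"

lemma zero_in_lin_span: "0 \<in> K \<Longrightarrow> 0 \<in> lin_span K B"
  unfolding lin_span_def by (rule CollectI, rule exI[of _ "\<lambda>_. 0"]) simp

lemma lin_span_mono:
  assumes "0 \<in> K" "finite B" "B' \<subseteq> B"
  shows "lin_span K B' \<subseteq> lin_span K B"
proof
  fix v assume "v \<in> lin_span K B'"
  then obtain c where c: "\<forall>b\<in>B'. c b \<in> K" and v: "v = (\<Sum>b\<in>B'. c b * b)"
    unfolding lin_span_def by blast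
  define c' where "c' b = (if b \<in> B' then c b else 0)" for b
  have "(\<Sum>b\<in>B. c' b * b) = (\<Sum>b\<in>B'. c' b * b)"
    using assms(2,3) by (intro sum.mono_neutral_right) (auto simp: c'_def)
  also have "\<dots> = v" unfolding v c'_def by simp
  finally have "v = (\<Sum>b\<in>B. c' b * b)" ..
  moreover have "\<forall>b\<in>B. c' b \<in> K" using c assms(1) by (simp add: c'_def)
  ultimately show "v \<in> lin_span K B" unfolding lin_span_def by force
qed

lemma lin_span_remove:
  fixes K :: "'a::idom set"
  assumes K: "subfield K" and "finite B" "b\<^sub>0 \<in> B" "g b\<^sub>0 \<noteq> 0"
    and ratios: "\<forall>b\<in>B. \<exists>k\<in>K. g b = k * g b\<^sub>0" and dependent: "(\<Sum>b\<in>B. g b * b) = 0"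
  shows "lin_span K (B - {b\<^sub>0}) = lin_span K B"
proof (rule antisym)
  show "lin_span K (B - {b\<^sub>0}) \<subseteq> lin_span K B"
    using K \<open>finite B\<close> by (intro lin_span_mono) (auto simp: subfield_def)
next
  from ratios obtain k where k: "\<forall>b\<in>B. k b \<in> K \<and> g b = k b * g b\<^sub>0" by metis
  then have "k b\<^sub>0 = 1" using \<open>b\<^sub>0 \<in> B\<close> \<open>g b\<^sub>0 \<noteq> 0\<close> by (metis mult_cancel_right2)
  have "g b\<^sub>0 * (\<Sum>b\<in>B. k b * b) = (\<Sum>b\<in>B. g b * b)"
    using k by (simp add: sum_distrib_left algebra_simps)
  then have k_dependent: "(\<Sum>b\<in>B. k b * b) = 0" using dependent \<open>g b\<^sub>0 \<noteq> 0\<close> by simp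
  show "lin_span K B \<subseteq> lin_span K (B - {b\<^sub>0})"
  proof
    fix v assume "v \<in> lin_span K B"
    then obtain c where c: "\<forall>b\<in>B. c b \<in> K" and v: "v = (\<Sum>b\<in>B. c b * b)"
      unfolding lin_span_def by blast
    define c' where "c' b = c b - c b\<^sub>0 * k b" for b
    have "(\<Sum>b\<in>B. c' b * b) = v - c b\<^sub>0 * (\<Sum>b\<in>B. k b * b)"
      unfolding c'_def v by (simp add: sum_subtractf sum_distrib_left algebra_simps)
    then have "v = (\<Sum>b\<in>B - {b\<^sub>0}. c' b * b)"
      using k_dependent \<open>k b\<^sub>0 = 1\<close> sum.remove[OF \<open>finite B\<close> \<open>b\<^sub>0 \<in> B\<close>, of "\<lambda>b. c' b * b"]
      by (simp add: c'_def)
    moreover have "\<forall>b\<in>B - {b\<^sub>0}. c' b \<in> K"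
      using K c k \<open>b\<^sub>0 \<in> B\<close> unfolding subfield_def c'_def by (metis DiffD1 diff_conv_add_uminus)
    ultimately show "v \<in> lin_span K (B - {b\<^sub>0})" unfolding lin_span_def by blast
  qed
qed

definition closed_lincomb :: "('b \<Rightarrow> 'a::comm_ring_1) set \<Rightarrow> bool" where
  "closed_lincomb \<L> \<longleftrightarrow> (\<lambda>_. 0) \<in> \<L> \<and> (\<forall>L\<in>\<L>. \<forall>M\<in>\<L>. (\<lambda>x. L x + M x) \<in> \<L>) \<and> (\<forall>c. \<forall>L\<in>\<L>. (\<lambda>x. c * L x) \<in> \<L>)"

lemma closed_lincomb_add: "closed_lincomb \<L> \<Longrightarrow> L \<in> \<L> \<Longrightarrow> M \<in> \<L> \<Longrightarrow> (\<lambda>x. L x + M x) \<in> \<L>"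
  and closed_lincomb_smult: "closed_lincomb \<L> \<Longrightarrow> L \<in> \<L> \<Longrightarrow> (\<lambda>x. c * L x) \<in> \<L>"
  unfolding closed_lincomb_def by blast+

lemma closed_lincomb_diff:
  assumes "closed_lincomb \<L>" "L \<in> \<L>" "M \<in> \<L>"
  shows "(\<lambda>x. L x - M x) \<in> \<L>"
  using closed_lincomb_add[OF assms(1,2) closed_lincomb_smult[OF assms(1,3), of "-1"]] by simp

lemma closed_lincomb_sum:
  assumes "closed_lincomb \<L>" "finite B" "\<forall>b\<in>B. F b \<in> \<L>"
  shows "(\<lambda>x. \<Sum>b\<in>B. c b * F b x) \<in> \<L>"
  using assms(2,3)
proof (induction B rule: finite_induct)
  case (insert y B)
  then have "(\<lambda>x. c y * F y x + (\<Sum>b\<in>B. c b * F b x)) \<in> \<L>"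
    by (simp add: closed_lincomb_add closed_lincomb_smult assms(1))
  with insert.hyps show ?case by simp
qed (use assms(1) in \<open>simp add: closed_lincomb_def\<close>)

text \<open>Over \<open>Frac(A)\<close> the matrix \<open>(L b)\<^bsub>L, b\<^esub>\<close> either has full column rank, witnessed by a family
  dual to \<open>B\<close> after clearing denominators, or its columns satisfy a nontrivial relation.\<close>

definition scaled_dual_family :: "('b \<Rightarrow> 'a::comm_ring_1) set \<Rightarrow> 'b set \<Rightarrow> 'a \<Rightarrow> ('b \<Rightarrow> 'b \<Rightarrow> 'a) \<Rightarrow> bool" where
  "scaled_dual_family \<L> B d Lf \<longleftrightarrow> d \<noteq> 0 \<and> (\<forall>b\<in>B. Lf b \<in> \<L>)
     \<and> (\<forall>b\<in>B. \<forall>b'\<in>B. Lf b b' = (if b = b' then d else 0))"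

definition annihilates :: "('b \<Rightarrow> 'a::comm_ring_1) set \<Rightarrow> 'b set \<Rightarrow> ('b \<Rightarrow> 'a) \<Rightarrow> bool" where
  "annihilates \<L> B g \<longleftrightarrow> (\<forall>L\<in>\<L>. (\<Sum>b\<in>B. g b * L b) = 0)"

definition lin_relation :: "('b \<Rightarrow> 'a::comm_ring_1) set \<Rightarrow> 'b set \<Rightarrow> ('b \<Rightarrow> 'a) \<Rightarrow> bool" where
  "lin_relation \<L> B g \<longleftrightarrow> (\<exists>b\<in>B. g b \<noteq> 0) \<and> annihilates \<L> B g"

lemma lin_relation_insert:
  assumes "lin_relation \<L> B g" "x \<notin> B" "finite B"
  shows "lin_relation \<L> (insert x B) (g(x := 0))"
proof -
  obtain b where "b \<in> B" "g b \<noteq> 0" using assms(1) unfolding lin_relation_def by blast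
  with assms(2) have "\<exists>b\<in>insert x B. (g(x := 0)) b \<noteq> 0" by auto
  moreover have "(\<Sum>b\<in>insert x B. (g(x := 0)) b * L b) = (\<Sum>b\<in>B. g b * L b)" for L
    using assms(2,3) by (auto intro!: sum.cong)
  ultimately show ?thesis using assms(1) unfolding lin_relation_def annihilates_def by simp
qed

definition dual_residual :: "'a::comm_ring_1 \<Rightarrow> 'b set \<Rightarrow> ('b \<Rightarrow> 'b \<Rightarrow> 'a) \<Rightarrow> ('b \<Rightarrow> 'a) \<Rightarrow> 'b \<Rightarrow> 'a" where
  "dual_residual d B Lf M = (\<lambda>y. d * M y - (\<Sum>b\<in>B. M b * Lf b y))"

lemma dual_residual_in:
  assumes "closed_lincomb \<L>" "finite B" "scaled_dual_family \<L> B d Lf" "M \<in> \<L>"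
  shows "dual_residual d B Lf M \<in> \<L>"
  unfolding dual_residual_def using assms(2-4)
  by (intro closed_lincomb_diff closed_lincomb_sum closed_lincomb_smult assms(1)) (auto simp: scaled_dual_family_def)

lemma dual_residual_vanishes:
  assumes "finite B" "scaled_dual_family \<L> B d Lf" "b \<in> B"
  shows "dual_residual d B Lf M b = 0"
proof -
  have "(\<Sum>b'\<in>B. M b' * Lf b' b) = (\<Sum>b'\<in>B. M b' * (if b' = b then d else 0))"
    using assms(2,3) unfolding scaled_dual_family_def by (intro sum.cong) auto
  also have "\<dots> = M b * d" using assms(1,3) by (simp add: if_distrib cong: if_cong)
  finally show ?thesis unfolding dual_residual_def by (simp add: mult.commute)
qed

lemma scaled_dual_family_insert:
  fixes \<L> :: "('b \<Rightarrow> 'a::idom) set"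
  assumes \<L>: "closed_lincomb \<L>" and "finite B" "x \<notin> B" and dual: "scaled_dual_family \<L> B d Lf"
  shows "(\<exists>d Lf. scaled_dual_family \<L> (insert x B) d Lf) \<or> (\<exists>g. lin_relation \<L> (insert x B) g)"
proof (cases "\<exists>M\<in>\<L>. dual_residual d B Lf M x \<noteq> 0")
  case True
  then obtain M where M: "M \<in> \<L>" and e: "dual_residual d B Lf M x \<noteq> 0" by blast
  define P e where "P = dual_residual d B Lf M" and "e = P x"
  define Lf' where "Lf' b = (if b = x then (\<lambda>y. d * P y) else (\<lambda>y. e * Lf b y - Lf b x * P y))" for b
  have "scaled_dual_family \<L> (insert x B) (d * e) Lf'"
    unfolding scaled_dual_family_def
  proof (intro conjI)
    show "d * e \<noteq> 0" using dual e unfolding P_def e_def scaled_dual_family_def by simp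
    show "\<forall>b\<in>insert x B. Lf' b \<in> \<L>"
      unfolding Lf'_def P_def using dual_residual_in[OF \<L> \<open>finite B\<close> dual M] dual
      by (auto intro!: closed_lincomb_diff closed_lincomb_smult \<L> simp: scaled_dual_family_def)
    show "\<forall>b\<in>insert x B. \<forall>b'\<in>insert x B. Lf' b b' = (if b = b' then d * e else 0)"
      using \<open>x \<notin> B\<close> dual dual_residual_vanishes[OF \<open>finite B\<close> dual]
      unfolding Lf'_def e_def P_def scaled_dual_family_def by auto
  qed
  then show ?thesis by blast
next
  case False
  define g where "g b = (if b = x then d else - Lf b x)" for b
  have "(\<Sum>b\<in>insert x B. g b * L b) = dual_residual d B Lf L x" for L
  proof -
    have "(\<Sum>b\<in>insert x B. g b * L b) = d * L x + (\<Sum>b\<in>B. - Lf b x * L b)"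
      using \<open>finite B\<close> \<open>x \<notin> B\<close> unfolding g_def by (auto intro!: sum.cong)
    also have "\<dots> = dual_residual d B Lf L x" unfolding dual_residual_def by (simp add: sum_negf mult.commute)
    finally show ?thesis .
  qed
  with False dual have "lin_relation \<L> (insert x B) g"
    unfolding lin_relation_def annihilates_def scaled_dual_family_def g_def by auto
  then show ?thesis by blast
qed

lemma scaled_dual_family_or_lin_relation:
  fixes \<L> :: "('b \<Rightarrow> 'a::idom) set"
  assumes "closed_lincomb \<L>" "finite B"
  shows "(\<exists>d Lf. scaled_dual_family \<L> B d Lf) \<or> (\<exists>g. lin_relation \<L> B g)"
  using assms(2)
proof (induction B rule: finite_induct)
  case empty
  have "scaled_dual_family \<L> {} 1 (\<lambda>_ _. 0)" by (simp add: scaled_dual_family_def)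
  then show ?case by blast
next
  case (insert x B)
  from insert.IH show ?case
  proof (elim disjE exE)
    fix d Lf assume "scaled_dual_family \<L> B d Lf"
    then show ?thesis by (rule scaled_dual_family_insert[OF assms(1) insert.hyps(1,2)])
  next
    fix g assume "lin_relation \<L> B g"
    then have "lin_relation \<L> (insert x B) (g(x := 0))" by (rule lin_relation_insert[OF _ insert.hyps(2,1)])
    then show ?thesis by blast
  qed
qed

inductive_set diff_ops :: "(nat \<Rightarrow> 'a::comm_ring_1 \<Rightarrow> 'a) \<Rightarrow> nat \<Rightarrow> ('a \<Rightarrow> 'a) set" for \<delta> m where
  id: "(\<lambda>x. x) \<in> diff_ops \<delta> m"
| comp: "L \<in> diff_ops \<delta> m \<Longrightarrow> i \<in> {1..m} \<Longrightarrow> (\<lambda>x. \<delta> i (L x)) \<in> diff_ops \<delta> m"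
| add: "L \<in> diff_ops \<delta> m \<Longrightarrow> M \<in> diff_ops \<delta> m \<Longrightarrow> (\<lambda>x. L x + M x) \<in> diff_ops \<delta> m"
| smult: "L \<in> diff_ops \<delta> m \<Longrightarrow> (\<lambda>x. c * L x) \<in> diff_ops \<delta> m"

lemma closed_lincomb_diff_ops: "closed_lincomb (diff_ops \<delta> m)"
proof -
  have "(\<lambda>x. 0 * x) \<in> diff_ops \<delta> m" by (rule diff_ops.smult[OF diff_ops.id])
  then show ?thesis unfolding closed_lincomb_def by (auto intro: diff_ops.add diff_ops.smult)
qed

lemma diff_ops_stable_ideal:
  assumes "L \<in> diff_ops \<delta> m" "is_ideal I" "\<forall>i\<in>{1..m}. \<delta> i ` I \<subseteq> I" "x \<in> I"
  shows "L x \<in> I"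
  using assms
proof induction
  case (comp L i)
  then show ?case by blast
qed (auto simp: is_ideal_def)

context
  fixes K :: "'a::idom set" and \<delta> :: "nat \<Rightarrow> 'a \<Rightarrow> 'a" and m :: nat
  assumes der: "\<forall>i\<in>{1..m}. lin_derivation K (\<delta> i)"
begin

lemma derivation_Leibniz: "i \<in> {1..m} \<Longrightarrow> \<delta> i (x * y) = x * \<delta> i y + y * \<delta> i x"
  using bspec[OF der, of i] by (simp add: lin_derivation_def)

lemma derivation_0: "i \<in> {1..m} \<Longrightarrow> \<delta> i 0 = 0"
  using bspec[OF der, of i] unfolding lin_derivation_def by (metis add_cancel_right_right)

lemma derivation_sum:
  assumes "i \<in> {1..m}" "finite B"
  shows "\<delta> i (\<Sum>b\<in>B. f b) = (\<Sum>b\<in>B. \<delta> i (f b))"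
  using assms(2)
proof (induction B rule: finite_induct)
  case (insert x B)
  then show ?case using bspec[OF der assms(1)] by (simp add: lin_derivation_def)
qed (simp add: derivation_0[OF assms(1)])

lemma diff_ops_add: "L \<in> diff_ops \<delta> m \<Longrightarrow> L (x + y) = L x + L y"
proof (induction rule: diff_ops.induct)
  case (comp L i)
  then show ?case using bspec[OF der comp.hyps(2)] by (simp add: lin_derivation_def)
qed (simp_all add: algebra_simps)

lemma diff_ops_0: "L \<in> diff_ops \<delta> m \<Longrightarrow> L 0 = 0"
  using diff_ops_add[of L 0 0] by (metis add_cancel_right_right)

lemma diff_ops_K_linear: "L \<in> diff_ops \<delta> m \<Longrightarrow> c \<in> K \<Longrightarrow> L (c * x) = c * L x"
proof (induction rule: diff_ops.induct)
  case (comp L i)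
  then have "\<delta> i (L (c * x)) = \<delta> i (c * L x)" by simp
  also have "\<dots> = c * \<delta> i (L x)" using bspec[OF der comp.hyps(2)] comp.prems unfolding lin_derivation_def by blast
  finally show ?case .
qed (simp_all add: algebra_simps)

lemma diff_ops_lincomb:
  assumes "L \<in> diff_ops \<delta> m" "finite B" "\<forall>b\<in>B. c b \<in> K"
  shows "L (\<Sum>b\<in>B. c b * b) = (\<Sum>b\<in>B. c b * L b)"
  using assms(2,3)
proof (induction B rule: finite_induct)
  case empty
  show ?case using diff_ops_0[OF assms(1)] by simp
qed (simp add: diff_ops_add[OF assms(1)] diff_ops_K_linear[OF assms(1)])

lemma scaled_dual_family_in_stable_ideal:
  assumes "subfield K" "is_ideal I" "\<forall>i\<in>{1..m}. \<delta> i ` I \<subseteq> I" "finite B"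
    and dual: "scaled_dual_family (diff_ops \<delta> m) B d Lf"
    and meets: "lin_span K B \<inter> I \<noteq> {0}"
  shows "d \<in> I"
proof -
  have "0 \<in> I" using \<open>is_ideal I\<close> by (simp add: is_ideal_def)
  moreover have "0 \<in> lin_span K B" using \<open>subfield K\<close> by (simp add: subfield_def zero_in_lin_span)
  ultimately obtain v where "v \<in> lin_span K B" "v \<in> I" "v \<noteq> 0" using meets by blast
  then obtain c where c: "\<forall>b\<in>B. c b \<in> K" and v: "(\<Sum>b\<in>B. c b * b) \<in> I" "(\<Sum>b\<in>B. c b * b) \<noteq> 0"
    unfolding lin_span_def by blast
  obtain b\<^sub>0 where b\<^sub>0: "b\<^sub>0 \<in> B" "c b\<^sub>0 \<noteq> 0"
    using v(2) sum.neutral[of B "\<lambda>b. c b * b"] by auto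
  from dual have Lf: "Lf b\<^sub>0 \<in> diff_ops \<delta> m" "\<forall>b\<in>B. Lf b\<^sub>0 b = (if b\<^sub>0 = b then d else 0)"
    using b\<^sub>0 unfolding scaled_dual_family_def by auto
  have "Lf b\<^sub>0 (\<Sum>b\<in>B. c b * b) = (\<Sum>b\<in>B. c b * (if b\<^sub>0 = b then d else 0))"
    using diff_ops_lincomb[OF Lf(1) \<open>finite B\<close> c] Lf(2) by simp
  also have "\<dots> = c b\<^sub>0 * d" using b\<^sub>0 \<open>finite B\<close> by (simp add: if_distrib cong: if_cong)
  finally have "c b\<^sub>0 * d \<in> I" using diff_ops_stable_ideal[OF Lf(1) assms(2,3) v(1)] by simp
  moreover obtain y where "c b\<^sub>0 * y = 1" using \<open>subfield K\<close> c b\<^sub>0 unfolding subfield_def by blast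
  ultimately have "y * (c b\<^sub>0 * d) \<in> I" using \<open>is_ideal I\<close> unfolding is_ideal_def by blast
  moreover have "y * (c b\<^sub>0 * d) = (c b\<^sub>0 * y) * d" by (simp add: ac_simps)
  ultimately show "d \<in> I" using \<open>c b\<^sub>0 * y = 1\<close> by simp
qed

lemma annihilates_derivative:
  assumes "i \<in> {1..m}" "finite B" and g: "annihilates (diff_ops \<delta> m) B g"
  shows "annihilates (diff_ops \<delta> m) B (\<lambda>b. \<beta> * \<delta> i (g b) - g b * \<delta> i \<beta>)"
  unfolding annihilates_def
proof
  fix L assume L: "L \<in> diff_ops \<delta> m"
  have rel: "(\<Sum>b\<in>B. g b * L b) = 0" "(\<Sum>b\<in>B. g b * \<delta> i (L b)) = 0"
    using g L diff_ops.comp[OF L assms(1)] unfolding annihilates_def by auto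
  have "0 = \<delta> i (\<Sum>b\<in>B. g b * L b)" using rel(1) derivation_0[OF assms(1)] by simp
  also have "\<dots> = (\<Sum>b\<in>B. g b * \<delta> i (L b)) + (\<Sum>b\<in>B. L b * \<delta> i (g b))"
    by (simp add: derivation_sum[OF assms(1,2)] derivation_Leibniz[OF assms(1)] sum.distrib)
  finally have "(\<Sum>b\<in>B. L b * \<delta> i (g b)) = 0" using rel(2) by simp
  moreover have "(\<Sum>b\<in>B. (\<beta> * \<delta> i (g b) - g b * \<delta> i \<beta>) * L b)
      = \<beta> * (\<Sum>b\<in>B. L b * \<delta> i (g b)) - \<delta> i \<beta> * (\<Sum>b\<in>B. g b * L b)"
    by (simp add: sum_distrib_left sum_subtractf algebra_simps)
  ultimately show "(\<Sum>b\<in>B. (\<beta> * \<delta> i (g b) - g b * \<delta> i \<beta>) * L b) = 0"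
    using rel(1) by simp
qed

lemma lin_relation_constant_ratios:
  assumes "finite B" "lin_relation (diff_ops \<delta> m) B g\<^sub>0"
  obtains g b\<^sub>0 where "lin_relation (diff_ops \<delta> m) B g" "b\<^sub>0 \<in> B" "g b\<^sub>0 \<noteq> 0"
    "\<And>i b. i \<in> {1..m} \<Longrightarrow> b \<in> B \<Longrightarrow> g b\<^sub>0 * \<delta> i (g b) = g b * \<delta> i (g b\<^sub>0)"
proof -
  define supp where "supp g = {b\<in>B. g b \<noteq> 0}" for g :: "'a \<Rightarrow> 'a"
  from ex_has_least_nat[of "lin_relation (diff_ops \<delta> m) B" g\<^sub>0 "\<lambda>g. card (supp g)", OF assms(2)]
  obtain g where g: "lin_relation (diff_ops \<delta> m) B g"
    and minimal: "\<And>h. lin_relation (diff_ops \<delta> m) B h \<Longrightarrow> card (supp g) \<le> card (supp h)"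
    by blast
  then obtain b\<^sub>0 where b\<^sub>0: "b\<^sub>0 \<in> B" "g b\<^sub>0 \<noteq> 0" unfolding lin_relation_def by blast
  have "g b\<^sub>0 * \<delta> i (g b) = g b * \<delta> i (g b\<^sub>0)" if i: "i \<in> {1..m}" and b: "b \<in> B" for i b
  proof (rule ccontr)
    define h where "h b = g b\<^sub>0 * \<delta> i (g b) - g b * \<delta> i (g b\<^sub>0)" for b
    assume "g b\<^sub>0 * \<delta> i (g b) \<noteq> g b * \<delta> i (g b\<^sub>0)"
    then have h: "lin_relation (diff_ops \<delta> m) B h"
      using b annihilates_derivative[OF i assms(1)] g unfolding lin_relation_def h_def by auto
    have "supp h \<subset> supp g"
    proof
      show "supp h \<subseteq> supp g" unfolding supp_def h_def using derivation_0[OF i] by auto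
      show "supp h \<noteq> supp g" using b\<^sub>0 unfolding supp_def h_def by (auto simp: mult.commute)
    qed
    then have "card (supp h) < card (supp g)"
      using \<open>finite B\<close> by (intro psubset_card_mono) (simp_all add: supp_def)
    with minimal[OF h] show False by simp
  qed
  then show ?thesis by (rule that[OF g b\<^sub>0])
qed

end

lemma exists_rational_first_integral:
  fixes K :: "'a::idom set" and \<delta> :: "nat \<Rightarrow> 'a \<Rightarrow> 'a"
  assumes K: "subfield K"
    and der: "\<And>i. i \<in> {1..m} \<Longrightarrow> lin_derivation K (\<delta> i)"
    and ideal: "\<And>I. I \<in> S \<Longrightarrow> is_ideal I"
    and stable: "\<And>i I. i \<in> {1..m} \<Longrightarrow> I \<in> S \<Longrightarrow> \<delta> i ` I \<subseteq> I"
    and "\<Inter> S = {0}" "finite B"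
    and meets: "\<And>I. I \<in> S \<Longrightarrow> lin_span K B \<inter> I \<noteq> {0}"
  shows "\<exists>f :: 'a fract. f \<notin> (\<lambda>c. Fract c 1) ` K \<and> (\<forall>i\<in>{1..m}. frac_deriv (\<delta> i) f = 0)"
  using \<open>finite B\<close> meets
proof (induction "card B" arbitrary: B rule: less_induct)
  case less
  from der have der': "\<forall>i\<in>{1..m}. lin_derivation K (\<delta> i)" by blast
  from scaled_dual_family_or_lin_relation[OF closed_lincomb_diff_ops less.prems(1)]
  consider d Lf where "scaled_dual_family (diff_ops \<delta> m) B d Lf" | g where "lin_relation (diff_ops \<delta> m) B g"
    by blast
  then show ?case
  proof cases
    case (1 d Lf)
    have "d \<in> I" if "I \<in> S" for I
      using scaled_dual_family_in_stable_ideal[OF der' K ideal[OF that] _ less.prems(1) 1 less.prems(2)[OF that]]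
        stable[OF _ that] by blast
    then have "d \<in> \<Inter> S" by blast
    with 1 \<open>\<Inter> S = {0}\<close> show ?thesis by (simp add: scaled_dual_family_def)
  next
    case 2
    obtain g b\<^sub>0 where g: "lin_relation (diff_ops \<delta> m) B g" "b\<^sub>0 \<in> B" "g b\<^sub>0 \<noteq> 0"
      and ratio: "\<And>i b. i \<in> {1..m} \<Longrightarrow> b \<in> B \<Longrightarrow> g b\<^sub>0 * \<delta> i (g b) = g b * \<delta> i (g b\<^sub>0)"
      using lin_relation_constant_ratios[OF der' less.prems(1) 2] by blast
    show ?thesis
    proof (cases "\<forall>b\<in>B. Fract (g b) (g b\<^sub>0) \<in> (\<lambda>c. Fract c 1) ` K")
      case True
      then have "\<forall>b\<in>B. \<exists>k\<in>K. g b = k * g b\<^sub>0" using g(3) by (auto simp: eq_fract)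
      moreover have "(\<Sum>b\<in>B. g b * b) = 0"
        using g(1) diff_ops.id unfolding lin_relation_def annihilates_def by fastforce
      ultimately have "lin_span K (B - {b\<^sub>0}) = lin_span K B"
        by (rule lin_span_remove[OF K less.prems(1) g(2), where g = g, OF g(3)])
      moreover have "card (B - {b\<^sub>0}) < card B" using less.prems(1) g(2) by (rule card_Diff1_less)
      ultimately show ?thesis using less.hyps[of "B - {b\<^sub>0}"] less.prems by auto
    next
      case False
      then obtain b where "b \<in> B" "Fract (g b) (g b\<^sub>0) \<notin> (\<lambda>c. Fract c 1) ` K" by blast
      moreover have "\<forall>i\<in>{1..m}. frac_deriv (\<delta> i) (Fract (g b) (g b\<^sub>0)) = 0"
        using ratio[OF _ \<open>b \<in> B\<close>] g(3) derivation_Leibniz[OF der']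
        by (auto intro: frac_deriv_Fract_eq_0)
      ultimately show ?thesis by blast
    qed
  qed
qed

theorem lemma3p1:
  fixes K :: "'a::idom set" and \<delta> :: "nat \<Rightarrow> 'a \<Rightarrow> 'a" and m :: nat
    and V :: "'a set" and S :: "'a set set"
  assumes "subfield K"
    and "\<And>i. i \<in> {1..m} \<Longrightarrow> lin_derivation K (\<delta> i)"
    and "fin_dim_subspace K V"
    and "\<And>I. I \<in> S \<Longrightarrow> is_ideal I"
    and "\<And>i I. i \<in> {1..m} \<Longrightarrow> I \<in> S \<Longrightarrow> \<delta> i ` I \<subseteq> I"
    and "\<Inter> S = {0}"
    and "\<And>I. I \<in> S \<Longrightarrow> V \<inter> I \<noteq> {0}"
  shows "\<exists>f :: 'a fract. f \<notin> (\<lambda>c. Fract c 1) ` K \<and> (\<forall>i\<in>{1..m}. frac_deriv (\<delta> i) f = 0)"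
proof -
  obtain B where B: "finite B" "V = lin_span K B"
    using assms(3) unfolding fin_dim_subspace_def lin_span_def by blast
  have meets: "lin_span K B \<inter> I \<noteq> {0}" if "I \<in> S" for I
    using assms(7)[OF that] B(2) by simp
  show ?thesis
    by (rule exists_rational_first_integral[of K m \<delta> S B]) (fact assms B(1) meets)+
qed

end
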